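(* Let $k$ be a field, $(X,\leq)$ a locally finite preordered set and $C=IC(X)$. Then the set $\{e_{x,y}\mid x,y\in X,\ x\leq y\}$ is a coradical basis of $C$.
   Context: $(X,\leq)$ is a reflexive transitive relation with all intervals $[x,y]$ finite. $IC(X)$ has $k$-basis $\{e_{x,y}\mid x\leq y\}$, $\Delta(e_{x,y})=\sum_{x\leq z\leq y}e_{x,z}\otimes e_{z,y}$, $\varepsilon(e_{x,y})=\delta_{x,y}$. The coradical $C_0$ is the sum of all simple subcoalgebras; $U\wedge V=\Delta^{-1}(U\otimes C+C\otimes V)$ and $C_n=C_0\wedge C_{n-1}$ for $n\geq 1$. A coradical basis of $C$ is a $k$-basis $\mathcal B$ with $\mathcal B\cap C_n$ a basis of $C_n$ for every $n$. *)

theory Defs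
  imports Complex_Main "HOL-Library.Function_Algebras"
begin

text \<open>Vector spaces over a field 'k are modelled as subsets of function spaces 'b \<Rightarrow> 'k
  (finitely supported functions = formal linear combinations of basis indices of type 'b),
  with pointwise scalar multiplication.  The tensor product of two such free spaces with
  index type 'b is modelled as (finitely supported) functions on 'b \<times> 'b, the elementary
  tensor u \<otimes> v being the function (p,q) \<mapsto> u p * v q.\<close>

definition fscale :: "'k::field \<Rightarrow> ('b \<Rightarrow> 'k) \<Rightarrow> ('b \<Rightarrow> 'k)" where
  "fscale c f = (\<lambda>x. c * f x)"

abbreviation lspan :: "('b \<Rightarrow> 'k::field) set \<Rightarrow> ('b \<Rightarrow> 'k) set" where
  "lspan S \<equiv> module.span fscale S"

abbreviation lsubspace :: "('b \<Rightarrow> 'k::field) set \<Rightarrow> bool" where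
  "lsubspace S \<equiv> module.subspace fscale S"

abbreviation lindependent :: "('b \<Rightarrow> 'k::field) set \<Rightarrow> bool" where
  "lindependent S \<equiv> \<not> module.dependent fscale S"

definition tens :: "('b \<Rightarrow> 'k::field) \<Rightarrow> ('b \<Rightarrow> 'k) \<Rightarrow> ('b \<times> 'b \<Rightarrow> 'k)" where
  "tens u v = (\<lambda>(p, q). u p * v q)"

definition tens_sp :: "('b \<Rightarrow> 'k::field) set \<Rightarrow> ('b \<Rightarrow> 'k) set \<Rightarrow> ('b \<times> 'b \<Rightarrow> 'k) set" where
  "tens_sp U V = lspan {tens u v | u v. u \<in> U \<and> v \<in> V}"

definition subcoalgebra ::
  "('b \<Rightarrow> 'k::field) set \<Rightarrow> (('b \<Rightarrow> 'k) \<Rightarrow> ('b \<times> 'b \<Rightarrow> 'k)) \<Rightarrow> ('b \<Rightarrow> 'k) set \<Rightarrow> bool" where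
  "subcoalgebra C D E \<longleftrightarrow> lsubspace E \<and> E \<subseteq> C \<and> (\<forall>f\<in>E. D f \<in> tens_sp E E)"

definition simple_subcoalgebra ::
  "('b \<Rightarrow> 'k::field) set \<Rightarrow> (('b \<Rightarrow> 'k) \<Rightarrow> ('b \<times> 'b \<Rightarrow> 'k)) \<Rightarrow> ('b \<Rightarrow> 'k) set \<Rightarrow> bool" where
  "simple_subcoalgebra C D E \<longleftrightarrow> subcoalgebra C D E \<and> E \<noteq> {0} \<and>
     (\<forall>F. subcoalgebra C D F \<and> F \<subseteq> E \<longrightarrow> F = {0} \<or> F = E)"

definition coradical ::
  "('b \<Rightarrow> 'k::field) set \<Rightarrow> (('b \<Rightarrow> 'k) \<Rightarrow> ('b \<times> 'b \<Rightarrow> 'k)) \<Rightarrow> ('b \<Rightarrow> 'k) set" where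
  "coradical C D = lspan (\<Union> {E. simple_subcoalgebra C D E})"

definition wedge ::
  "('b \<Rightarrow> 'k::field) set \<Rightarrow> (('b \<Rightarrow> 'k) \<Rightarrow> ('b \<times> 'b \<Rightarrow> 'k)) \<Rightarrow> ('b \<Rightarrow> 'k) set \<Rightarrow> ('b \<Rightarrow> 'k) set \<Rightarrow> ('b \<Rightarrow> 'k) set" where
  "wedge C D U V = {f \<in> C. D f \<in> lspan (tens_sp U C \<union> tens_sp C V)}"

fun coradical_filt ::
  "('b \<Rightarrow> 'k::field) set \<Rightarrow> (('b \<Rightarrow> 'k) \<Rightarrow> ('b \<times> 'b \<Rightarrow> 'k)) \<Rightarrow> nat \<Rightarrow> ('b \<Rightarrow> 'k) set" where
  "coradical_filt C D 0 = coradical C D"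
| "coradical_filt C D (Suc n) = wedge C D (coradical C D) (coradical_filt C D n)"

definition is_basis_of :: "('b \<Rightarrow> 'k::field) set \<Rightarrow> ('b \<Rightarrow> 'k) set \<Rightarrow> bool" where
  "is_basis_of B V \<longleftrightarrow> B \<subseteq> V \<and> lindependent B \<and> lspan B = V"

definition coradical_basis ::
  "('b \<Rightarrow> 'k::field) set \<Rightarrow> (('b \<Rightarrow> 'k) \<Rightarrow> ('b \<times> 'b \<Rightarrow> 'k)) \<Rightarrow> ('b \<Rightarrow> 'k) set \<Rightarrow> bool" where
  "coradical_basis C D B \<longleftrightarrow> is_basis_of B C \<and>
     (\<forall>n. is_basis_of (B \<inter> coradical_filt C D n) (coradical_filt C D n))"

definition IC_carrier :: "('a \<Rightarrow> 'a \<Rightarrow> bool) \<Rightarrow> ('a \<times> 'a \<Rightarrow> 'k::field) set" where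
  "IC_carrier le = {f. finite {p. f p \<noteq> 0} \<and> (\<forall>x y. f (x, y) \<noteq> 0 \<longrightarrow> le x y)}"

definition e_basis :: "'a \<Rightarrow> 'a \<Rightarrow> ('a \<times> 'a \<Rightarrow> 'k::field)" where
  "e_basis x y = (\<lambda>p. if p = (x, y) then 1 else 0)"

text \<open>Comultiplication, the linear extension of
  e_{x,y} \<mapsto> \<Sum>_{x\<le>z\<le>y} e_{x,z} \<otimes> e_{z,y}: coefficient of e_{a,b} \<otimes> e_{c,d} in \<Delta> f.\<close>
definition IC_delta :: "('a \<Rightarrow> 'a \<Rightarrow> bool) \<Rightarrow> ('a \<times> 'a \<Rightarrow> 'k::field) \<Rightarrow> (('a \<times> 'a) \<times> ('a \<times> 'a) \<Rightarrow> 'k)" where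
  "IC_delta le f = (\<lambda>((a, b), (c, d)). if b = c \<and> le a b \<and> le b d then f (a, d) else 0)"

end

theory Submission
  imports Defs
begin

text \<open>If f lies in a subcoalgebra E of IC(X) and f(a, d) \<noteq> 0, then slicing the
  comultiplication twice (once in each tensor factor) cuts f down to a nonzero multiple of
  e_{b,c}, so e_{b,c} \<in> E whenever a \<le> b \<le> c \<le> d. Hence the simple subcoalgebras are the
  blocks spanned by the e_{x,y} with x, y in one equivalence class of the preorder, and C_0 is
  spanned by the e_{x,y} with x \<le> y \<le> x. The wedge of the spans of the basis vectors indexed
  by P and by Q is again such a span, indexed by the pairs a \<le> d all of whose factorizations
  a \<le> b \<le> d have (a, b) \<in> P or (b, d) \<in> Q. By induction every C_n is spanned by a subset
  of the basis.\<close>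

interpretation fs: module "fscale :: 'k::field \<Rightarrow> ('b \<Rightarrow> 'k) \<Rightarrow> ('b \<Rightarrow> 'k)"
  by unfold_locales (auto simp: fscale_def algebra_simps)

lemma fscale_apply [simp]: "fscale c f x = c * f x"
  by (simp add: fscale_def)

lemma sum_apply: "(sum f A) x = (\<Sum>a\<in>A. f a x)"
  by (induct A rule: infinite_finite_induct) auto

definition unit_fun :: "'b \<Rightarrow> ('b \<Rightarrow> 'k::field)" where
  "unit_fun p = (\<lambda>q. if q = p then 1 else 0)"

definition supp_in :: "'b set \<Rightarrow> ('b \<Rightarrow> 'k::field) set" where
  "supp_in P = {f. \<forall>p. p \<notin> P \<longrightarrow> f p = 0}"

definition fsupp_on :: "'b set \<Rightarrow> ('b \<Rightarrow> 'k::field) set" where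
  "fsupp_on P = {f. finite {p. f p \<noteq> 0} \<and> (\<forall>p. f p \<noteq> 0 \<longrightarrow> p \<in> P)}"

lemma unit_fun_neq_0: "(unit_fun p :: 'b \<Rightarrow> 'k::field) \<noteq> 0"
  by (auto simp: unit_fun_def fun_eq_iff)

lemma unit_fun_mem_fsupp_on_iff [simp]: "(unit_fun p :: 'b \<Rightarrow> 'k::field) \<in> fsupp_on P \<longleftrightarrow> p \<in> P"
  by (auto simp: fsupp_on_def unit_fun_def)

lemma fsupp_on_mono: "P \<subseteq> Q \<Longrightarrow> fsupp_on P \<subseteq> fsupp_on Q"
  unfolding fsupp_on_def by auto

lemma subspace_supp_in: "lsubspace (supp_in P :: ('b \<Rightarrow> 'k::field) set)"
  by (rule fs.subspaceI) (auto simp: supp_in_def)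

lemma supp_in_UNIV [simp]: "supp_in UNIV = UNIV"
  by (simp add: supp_in_def)

lemma supp_in_mono: "P \<subseteq> Q \<Longrightarrow> supp_in P \<subseteq> supp_in Q"
  by (auto simp: supp_in_def)

lemma fsupp_on_subset_supp_in: "fsupp_on P \<subseteq> supp_in P"
  by (auto simp: fsupp_on_def supp_in_def)

lemma subspace_fsupp_on: "lsubspace (fsupp_on P :: ('b \<Rightarrow> 'k::field) set)"
proof (rule fs.subspaceI)
  fix f g :: "'b \<Rightarrow> 'k" assume "f \<in> fsupp_on P" "g \<in> fsupp_on P"
  moreover have "{p. (f + g) p \<noteq> 0} \<subseteq> {p. f p \<noteq> 0} \<union> {p. g p \<noteq> 0}" by auto
  ultimately show "f + g \<in> fsupp_on P"
    unfolding fsupp_on_def by (auto dest: finite_subset)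
next
  fix c and f :: "'b \<Rightarrow> 'k" assume "f \<in> fsupp_on P"
  moreover have "{p. fscale c f p \<noteq> 0} \<subseteq> {p. f p \<noteq> 0}" by auto
  ultimately show "fscale c f \<in> fsupp_on P"
    unfolding fsupp_on_def by (auto dest: finite_subset)
qed (simp add: fsupp_on_def)

lemma fsupp_eq_sum_unit_funs:
  fixes f :: "'b \<Rightarrow> 'k::field"
  assumes "finite {p. f p \<noteq> 0}"
  shows "f = (\<Sum>p | f p \<noteq> 0. fscale (f p) (unit_fun p))"
proof
  fix x
  have "(\<Sum>p | f p \<noteq> 0. fscale (f p) (unit_fun p)) x = (\<Sum>p | f p \<noteq> 0. if p = x then f p else 0)"
    unfolding sum_apply by (intro sum.cong) (auto simp: unit_fun_def)
  also have "\<dots> = f x"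
    using assms by (simp add: sum.delta)
  finally show "f x = (\<Sum>p | f p \<noteq> 0. fscale (f p) (unit_fun p)) x" by simp
qed

lemma span_unit_funs: "lspan (unit_fun ` P) = (fsupp_on P :: ('b \<Rightarrow> 'k::field) set)"
proof
  show "lspan (unit_fun ` P) \<subseteq> (fsupp_on P :: ('b \<Rightarrow> 'k) set)"
    by (rule fs.span_minimal) (auto simp: subspace_fsupp_on)
  show "fsupp_on P \<subseteq> (lspan (unit_fun ` P) :: ('b \<Rightarrow> 'k) set)"
  proof
    fix f :: "'b \<Rightarrow> 'k" assume f: "f \<in> fsupp_on P"
    then have "(\<Sum>p | f p \<noteq> 0. fscale (f p) (unit_fun p)) \<in> lspan (unit_fun ` P)"
      by (intro fs.span_sum fs.span_scale fs.span_base) (auto simp: fsupp_on_def)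
    moreover have "finite {p. f p \<noteq> 0}"
      using f by (simp add: fsupp_on_def)
    ultimately show "f \<in> lspan (unit_fun ` P)"
      by (simp only: fsupp_eq_sum_unit_funs[symmetric])
  qed
qed

lemma fsupp_on_subset_subspace:
  fixes E :: "('b \<Rightarrow> 'k::field) set"
  assumes "lsubspace E" "\<And>p. p \<in> P \<Longrightarrow> unit_fun p \<in> E"
  shows "fsupp_on P \<subseteq> E"
  using fs.span_minimal[of "unit_fun ` P" E] assms by (auto simp: span_unit_funs)

lemma independent_unit_funs: "lindependent (unit_fun ` P :: ('b \<Rightarrow> 'k::field) set)"
  unfolding fs.independent_explicit_module
proof (intro allI impI)
  fix t u and v :: "'b \<Rightarrow> 'k"
  assume t: "finite t" "t \<subseteq> unit_fun ` P" and sum0: "(\<Sum>w\<in>t. fscale (u w) w) = 0" and v: "v \<in> t"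
  from t(2) v obtain p where p: "v = unit_fun p" by blast
  have "(\<Sum>w\<in>t. fscale (u w) w) p = u v * v p + (\<Sum>w\<in>t - {v}. u w * w p)"
    using t(1) v by (simp add: sum_apply sum.remove)
  also have "(\<Sum>w\<in>t - {v}. u w * w p) = 0"
    using t(2) p by (intro sum.neutral) (auto simp: unit_fun_def split: if_splits)
  finally have "(\<Sum>w\<in>t. fscale (u w) w) p = u v"
    using p by (simp add: unit_fun_def fscale_def)
  then show "u v = 0"
    unfolding sum0 by simp
qed

lemma basis_unit_funs: "is_basis_of (unit_fun ` P) (fsupp_on P :: ('b \<Rightarrow> 'k::field) set)"
  by (auto simp: is_basis_of_def independent_unit_funs span_unit_funs)

lemma unit_funs_inter_fsupp_on: "unit_fun ` Q \<inter> fsupp_on P = (unit_fun ` (Q \<inter> P) :: ('b \<Rightarrow> 'k::field) set)"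
  by auto

lemma obtain_nonzero_value:
  fixes E :: "('b \<times> 'c \<Rightarrow> 'k::field) set"
  assumes "lsubspace E" "E \<noteq> {0}"
  obtains f x y where "f \<in> E" "f (x, y) \<noteq> 0"
proof -
  obtain f where "f \<in> E" "f \<noteq> 0"
    using assms fs.subspace_0 by blast
  then show thesis
    using that by (auto simp: fun_eq_iff)
qed

lemma subspace_tens_sp: "lsubspace (tens_sp U V)"
  by (simp add: tens_sp_def)

lemma tens_mem_tens_sp: "u \<in> U \<Longrightarrow> v \<in> V \<Longrightarrow> tens u v \<in> tens_sp U V"
  unfolding tens_sp_def by (rule fs.span_base) blast

lemma tens_sp_linear_image_mem:
  fixes L :: "('b \<times> 'b \<Rightarrow> 'k::field) \<Rightarrow> ('c \<Rightarrow> 'k)"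
  assumes "module_hom fscale fscale L" "lsubspace W"
    and "\<And>u v. u \<in> U \<Longrightarrow> v \<in> V \<Longrightarrow> L (tens u v) \<in> W"
    and "h \<in> tens_sp U V"
  shows "L h \<in> W"
proof -
  have "tens_sp U V \<subseteq> L -` W"
    unfolding tens_sp_def
    using assms(3) module_hom.subspace_vimage[OF assms(1,2)] by (intro fs.span_minimal) auto
  with assms(4) show ?thesis by blast
qed

lemma module_hom_precompose: "module_hom fscale fscale (\<lambda>h :: 'b \<Rightarrow> 'k::field. \<lambda>q. h (g q))"
  by unfold_locales (simp_all add: fscale_def fun_eq_iff)

lemma tens_sp_left_slice:
  assumes "lsubspace V" "h \<in> tens_sp U V"
  shows "(\<lambda>q. h (p, q)) \<in> V"
proof (rule tens_sp_linear_image_mem[OF module_hom_precompose assms(1) _ assms(2)])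
  fix u v assume "v \<in> V"
  then have "fscale (u p) v \<in> V" by (rule fs.subspace_scale[OF assms(1)])
  then show "(\<lambda>q. tens u v (p, q)) \<in> V"
    by (simp add: tens_def fscale_def)
qed

lemma tens_sp_right_slice:
  assumes "lsubspace U" "h \<in> tens_sp U V"
  shows "(\<lambda>q. h (q, p)) \<in> U"
proof (rule tens_sp_linear_image_mem[OF module_hom_precompose assms(1) _ assms(2)])
  fix u v assume "u \<in> U"
  then have "fscale (v p) u \<in> U" by (rule fs.subspace_scale[OF assms(1)])
  then show "(\<lambda>q. tens u v (q, p)) \<in> U"
    by (simp add: tens_def fscale_def mult.commute)
qed

lemma tens_sp_subset_supp_in:
  assumes "U \<subseteq> supp_in P" "V \<subseteq> supp_in Q"
  shows "tens_sp U V \<subseteq> supp_in (P \<times> Q)"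
  unfolding tens_sp_def using assms
  by (intro fs.span_minimal subspace_supp_in) (auto simp: tens_def supp_in_def)

lemma IC_carrier_eq: "IC_carrier le = fsupp_on {(x, y). le x y}"
  unfolding IC_carrier_def fsupp_on_def by auto

lemma IC_delta_apply:
  "IC_delta le f ((a, b), (c, d)) = (if b = c \<and> le a b \<and> le b d then f (a, d) else 0)"
  by (simp add: IC_delta_def)

locale locally_finite_preorder =
  fixes le :: "'a \<Rightarrow> 'a \<Rightarrow> bool"
  assumes refl: "le x x"
    and trans: "le x y \<Longrightarrow> le y z \<Longrightarrow> le x z"
    and interval_finite: "finite {z. le x z \<and> le z y}"
begin

definition factorizations :: "('a \<times> 'a \<Rightarrow> 'k::field) \<Rightarrow> ('a \<times> 'a \<times> 'a) set" where
  "factorizations f = {(a, b, d). f (a, d) \<noteq> 0 \<and> le a b \<and> le b d}"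

lemma finite_factorizations:
  assumes "finite {p. f p \<noteq> 0}"
  shows "finite (factorizations f)"
proof -
  let ?S = "SIGMA p:{p. f p \<noteq> 0}. {z. le (fst p) z \<and> le z (snd p)}"
  have "finite ?S"
    using assms interval_finite by (intro finite_SigmaI) auto
  moreover have "factorizations f \<subseteq> (\<lambda>((a, d), b). (a, b, d)) ` ?S"
    unfolding factorizations_def by force
  ultimately show ?thesis by (rule finite_surj)
qed

lemma IC_delta_eq_sum:
  assumes "finite {p. f p \<noteq> 0}"
  shows "IC_delta le f =
    (\<Sum>(a, b, d)\<in>factorizations f. fscale (f (a, d)) (tens (unit_fun (a, b)) (unit_fun (b, d))))"
proof
  fix z :: "('a \<times> 'a) \<times> ('a \<times> 'a)"
  obtain x y u w where z: "z = ((x, y), (u, w))" by (metis prod.exhaust)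
  let ?c = "if y = u then f (x, w) else 0"
  have "(\<Sum>(a, b, d)\<in>factorizations f. fscale (f (a, d)) (tens (unit_fun (a, b)) (unit_fun (b, d)))) z
      = (\<Sum>t\<in>factorizations f. if t = (x, y, w) then ?c else 0)"
    unfolding sum_apply by (intro sum.cong) (auto simp: z tens_def unit_fun_def split: if_splits)
  also have "\<dots> = IC_delta le f z"
    using finite_factorizations[OF assms] by (auto simp: z IC_delta_apply factorizations_def)
  finally show "IC_delta le f z =
    (\<Sum>(a, b, d)\<in>factorizations f. fscale (f (a, d)) (tens (unit_fun (a, b)) (unit_fun (b, d)))) z"
    by simp
qed

lemma IC_delta_mem_subspace:
  assumes "finite {p. f p \<noteq> 0}" "lsubspace S"
    and "\<And>a b d. f (a, d) \<noteq> 0 \<Longrightarrow> le a b \<Longrightarrow> le b d \<Longrightarrow>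
      tens (unit_fun (a, b)) (unit_fun (b, d)) \<in> S"
  shows "IC_delta le f \<in> S"
  unfolding IC_delta_eq_sum[OF assms(1)]
  using assms(2,3) by (intro fs.subspace_sum) (auto simp: factorizations_def fs.subspace_scale)

lemma fsupp_on_subcoalgebra:
  assumes "P \<subseteq> {(x, y). le x y}"
    and "\<And>a b d. (a, d) \<in> P \<Longrightarrow> le a b \<Longrightarrow> le b d \<Longrightarrow> (a, b) \<in> P \<and> (b, d) \<in> P"
  shows "subcoalgebra (IC_carrier le) (IC_delta le) (fsupp_on P :: ('a \<times> 'a \<Rightarrow> 'k::field) set)"
  unfolding subcoalgebra_def
proof (intro conjI ballI subspace_fsupp_on)
  show "fsupp_on P \<subseteq> (IC_carrier le :: ('a \<times> 'a \<Rightarrow> 'k) set)"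
    unfolding IC_carrier_eq using assms(1) by (rule fsupp_on_mono)
  fix f :: "'a \<times> 'a \<Rightarrow> 'k" assume "f \<in> fsupp_on P"
  show "IC_delta le f \<in> tens_sp (fsupp_on P) (fsupp_on P)"
  proof (rule IC_delta_mem_subspace[OF _ subspace_tens_sp])
    fix a b d assume "f (a, d) \<noteq> 0" "le a b" "le b d"
    with \<open>f \<in> fsupp_on P\<close> have "(a, d) \<in> P"
      by (simp add: fsupp_on_def)
    with assms(2) \<open>le a b\<close> \<open>le b d\<close> have "(a, b) \<in> P" "(b, d) \<in> P"
      by blast+
    then show "tens (unit_fun (a, b)) (unit_fun (b, d)) \<in> tens_sp (fsupp_on P) (fsupp_on P)"
      by (simp add: tens_mem_tens_sp)
  qed (use \<open>f \<in> fsupp_on P\<close> in \<open>simp add: fsupp_on_def\<close>)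
qed

lemma subcoalgebra_unit_fun_mem:
  fixes E :: "('a \<times> 'a \<Rightarrow> 'k::field) set"
  assumes E: "subcoalgebra (IC_carrier le) (IC_delta le) E" and "f \<in> E" "f (a, d) \<noteq> 0"
    and "le a b" "le b c" "le c d"
  shows "unit_fun (b, c) \<in> E"
proof -
  have sE: "lsubspace E" and DE: "\<And>g. g \<in> E \<Longrightarrow> IC_delta le g \<in> tens_sp E E"
    using E unfolding subcoalgebra_def by auto
  define g where "g = (\<lambda>q. IC_delta le f ((a, b), q))"
  define h where "h = (\<lambda>q. IC_delta le g (q, (c, d)))"
  have "g \<in> E"
    unfolding g_def by (rule tens_sp_left_slice[OF sE DE[OF \<open>f \<in> E\<close>]])
  then have "h \<in> E"
    unfolding h_def by (rule tens_sp_right_slice[OF sE DE])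
  then have "fscale (inverse (f (a, d))) h \<in> E"
    by (rule fs.subspace_scale[OF sE])
  moreover have "fscale (inverse (f (a, d))) h = unit_fun (b, c)"
    using assms(3-6) trans[of b c d]
    by (auto simp: fun_eq_iff h_def g_def IC_delta_apply unit_fun_def)
  ultimately show ?thesis by simp
qed

definition equiv_class :: "'a \<Rightarrow> 'a set" where
  "equiv_class a = {z. le a z \<and> le z a}"

lemma mem_equiv_class_self: "a \<in> equiv_class a"
  by (simp add: equiv_class_def refl)

abbreviation class_block :: "'a \<Rightarrow> ('a \<times> 'a \<Rightarrow> 'k::field) set" where
  "class_block a \<equiv> fsupp_on (equiv_class a \<times> equiv_class a)"

lemma equiv_class_eqI: "x \<in> equiv_class a \<Longrightarrow> equiv_class x = equiv_class a"
  unfolding equiv_class_def by (blast intro: trans)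

lemma class_block_subcoalgebra:
  "subcoalgebra (IC_carrier le) (IC_delta le)
    (class_block a :: ('a \<times> 'a \<Rightarrow> 'k::field) set)"
proof (rule fsupp_on_subcoalgebra)
  show "equiv_class a \<times> equiv_class a \<subseteq> {(x, y). le x y}"
    unfolding equiv_class_def by (blast intro: trans)
  show "(x, b) \<in> equiv_class a \<times> equiv_class a \<and> (b, y) \<in> equiv_class a \<times> equiv_class a"
    if "(x, y) \<in> equiv_class a \<times> equiv_class a" "le x b" "le b y" for x b y
    using that unfolding equiv_class_def by (blast intro: trans)
qed

lemma class_block_neq_zero:
  "(class_block a :: ('a \<times> 'a \<Rightarrow> 'k::field) set) \<noteq> {0}"
proof -
  have "unit_fun (a, a) \<in> (class_block a :: ('a \<times> 'a \<Rightarrow> 'k) set)"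
    by (simp add: mem_equiv_class_self)
  moreover have "unit_fun (a, a) \<noteq> (0 :: 'a \<times> 'a \<Rightarrow> 'k)"
    by (rule unit_fun_neq_0)
  ultimately show ?thesis by blast
qed

lemma subcoalgebra_contains_class_block:
  fixes E :: "('a \<times> 'a \<Rightarrow> 'k::field) set"
  assumes E: "subcoalgebra (IC_carrier le) (IC_delta le) E" and "f \<in> E" "f (a, d) \<noteq> 0"
  shows "class_block a \<subseteq> E"
proof (rule fsupp_on_subset_subspace)
  show "lsubspace E"
    using E by (simp add: subcoalgebra_def)
  have "le a d"
    using E assms(2,3) by (auto simp: subcoalgebra_def IC_carrier_def)
  fix p assume "p \<in> equiv_class a \<times> equiv_class a"
  then obtain x y where "p = (x, y)" "le a x" "le x y" "le y d"
    using \<open>le a d\<close> unfolding equiv_class_def by (blast intro: trans)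
  then show "unit_fun p \<in> E"
    using subcoalgebra_unit_fun_mem[OF E assms(2,3)] by simp
qed

lemma simple_subcoalgebra_iff:
  fixes E :: "('a \<times> 'a \<Rightarrow> 'k::field) set"
  shows "simple_subcoalgebra (IC_carrier le) (IC_delta le) E \<longleftrightarrow>
    (\<exists>a. E = class_block a)"
proof
  assume simple: "simple_subcoalgebra (IC_carrier le) (IC_delta le) E"
  then have E: "subcoalgebra (IC_carrier le) (IC_delta le) E" "E \<noteq> {0}"
    and minimal: "\<And>F. subcoalgebra (IC_carrier le) (IC_delta le) F \<Longrightarrow> F \<subseteq> E \<Longrightarrow>
      F = {0} \<or> F = E"
    by (simp_all add: simple_subcoalgebra_def)
  have "lsubspace E"
    using E(1) by (simp add: subcoalgebra_def)
  then obtain f x y where f: "f \<in> E" "f (x, y) \<noteq> 0"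
    using E(2) by (rule obtain_nonzero_value)
  have "class_block x = E"
    using minimal[OF class_block_subcoalgebra subcoalgebra_contains_class_block[OF E(1) f]]
      class_block_neq_zero[of x] by blast
  then show "\<exists>a. E = class_block a" by blast
next
  assume "\<exists>a. E = class_block a"
  then obtain a where E: "E = class_block a" ..
  have "F = E" if F: "subcoalgebra (IC_carrier le) (IC_delta le) F" "F \<subseteq> E" "F \<noteq> {0}" for F
  proof -
    have "lsubspace F"
      using F(1) by (simp add: subcoalgebra_def)
    then obtain f x y where f: "f \<in> F" "f (x, y) \<noteq> 0"
      using F(3) by (rule obtain_nonzero_value)
    with F(2) have "x \<in> equiv_class a"
      by (auto simp: E fsupp_on_def)
    then have "E \<subseteq> F"
      using subcoalgebra_contains_class_block[OF F(1) f] by (simp add: E equiv_class_eqI)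
    with F(2) show "F = E" by blast
  qed
  then show "simple_subcoalgebra (IC_carrier le) (IC_delta le) E"
    unfolding simple_subcoalgebra_def E
    using class_block_subcoalgebra class_block_neq_zero by auto
qed

definition wedge_pairs :: "('a \<times> 'a) set \<Rightarrow> ('a \<times> 'a) set \<Rightarrow> ('a \<times> 'a) set" where
  "wedge_pairs P Q = {(a, d). le a d \<and> (\<forall>b. le a b \<and> le b d \<longrightarrow> (a, b) \<in> P \<or> (b, d) \<in> Q)}"

fun coradical_filt_pairs :: "nat \<Rightarrow> ('a \<times> 'a) set" where
  "coradical_filt_pairs 0 = {(x, y). le x y \<and> le y x}"
| "coradical_filt_pairs (Suc n) = wedge_pairs (coradical_filt_pairs 0) (coradical_filt_pairs n)"

lemma coradical_eq:
  "coradical (IC_carrier le) (IC_delta le) = (fsupp_on (coradical_filt_pairs 0) :: ('a \<times> 'a \<Rightarrow> 'k::field) set)"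
proof
  have "class_block a \<subseteq> (fsupp_on (coradical_filt_pairs 0) :: ('a \<times> 'a \<Rightarrow> 'k) set)" for a
    by (intro fsupp_on_mono) (auto simp: equiv_class_def intro: trans[of _ a])
  then show "coradical (IC_carrier le) (IC_delta le) \<subseteq> (fsupp_on (coradical_filt_pairs 0) :: ('a \<times> 'a \<Rightarrow> 'k) set)"
    unfolding coradical_def simple_subcoalgebra_iff
    by (intro fs.span_minimal subspace_fsupp_on) blast
  show "fsupp_on (coradical_filt_pairs 0) \<subseteq> (coradical (IC_carrier le) (IC_delta le) :: ('a \<times> 'a \<Rightarrow> 'k) set)"
    unfolding coradical_def simple_subcoalgebra_iff
  proof (rule fsupp_on_subset_subspace[OF fs.subspace_span])
    fix p assume "p \<in> coradical_filt_pairs 0"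
    then obtain x y where "p = (x, y)" "x \<in> equiv_class x" "y \<in> equiv_class x"
      by (auto simp: equiv_class_def refl)
    then have "unit_fun p \<in> (class_block x :: ('a \<times> 'a \<Rightarrow> 'k) set)"
      by simp
    then show "unit_fun p \<in> lspan (\<Union> {E :: ('a \<times> 'a \<Rightarrow> 'k) set. \<exists>a. E = class_block a})"
      by (intro fs.span_base) blast
  qed
qed

lemma wedge_fsupp_on_subset:
  "wedge (IC_carrier le) (IC_delta le) (fsupp_on P) (fsupp_on Q)
    \<subseteq> (fsupp_on (wedge_pairs P Q) :: ('a \<times> 'a \<Rightarrow> 'k::field) set)"
proof
  let ?C = "IC_carrier le :: ('a \<times> 'a \<Rightarrow> 'k) set"
  let ?R = "P \<times> UNIV \<union> UNIV \<times> Q"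
  fix f assume "f \<in> wedge ?C (IC_delta le) (fsupp_on P) (fsupp_on Q)"
  then have f: "f \<in> ?C" and Df: "IC_delta le f \<in> lspan (tens_sp (fsupp_on P) ?C \<union> tens_sp ?C (fsupp_on Q))"
    by (simp_all add: wedge_def)
  have "tens_sp (fsupp_on P) ?C \<subseteq> supp_in (P \<times> UNIV)"
    by (intro tens_sp_subset_supp_in fsupp_on_subset_supp_in) simp
  also have "\<dots> \<subseteq> supp_in ?R"
    by (intro supp_in_mono) blast
  finally have left: "tens_sp (fsupp_on P) ?C \<subseteq> supp_in ?R" .
  have "tens_sp ?C (fsupp_on Q) \<subseteq> supp_in (UNIV \<times> Q)"
    by (intro tens_sp_subset_supp_in fsupp_on_subset_supp_in) simp
  also have "\<dots> \<subseteq> supp_in ?R"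
    by (intro supp_in_mono) blast
  finally have right: "tens_sp ?C (fsupp_on Q) \<subseteq> supp_in ?R" .
  have Df_supp: "IC_delta le f \<in> supp_in ?R"
    using Df fs.span_minimal[OF Un_least[OF left right] subspace_supp_in] by blast
  have factor: "(a, b) \<in> P \<or> (b, d) \<in> Q" if "f (a, d) \<noteq> 0" "le a b" "le b d" for a b d
  proof -
    have "IC_delta le f ((a, b), (b, d)) \<noteq> 0"
      using that by (simp add: IC_delta_apply)
    with Df_supp show ?thesis
      by (auto simp: supp_in_def)
  qed
  show "f \<in> fsupp_on (wedge_pairs P Q)"
    using f factor by (auto simp: IC_carrier_def fsupp_on_def wedge_pairs_def)
qed

lemma fsupp_on_subset_wedge:
  "(fsupp_on (wedge_pairs P Q) :: ('a \<times> 'a \<Rightarrow> 'k::field) set)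
    \<subseteq> wedge (IC_carrier le) (IC_delta le) (fsupp_on P) (fsupp_on Q)"
proof
  let ?C = "IC_carrier le :: ('a \<times> 'a \<Rightarrow> 'k) set"
  let ?S = "lspan (tens_sp (fsupp_on P) ?C \<union> tens_sp ?C (fsupp_on Q))"
  fix f :: "'a \<times> 'a \<Rightarrow> 'k" assume f: "f \<in> fsupp_on (wedge_pairs P Q)"
  have "wedge_pairs P Q \<subseteq> {(x, y). le x y}"
    by (auto simp: wedge_pairs_def)
  with f have "f \<in> ?C"
    unfolding IC_carrier_eq using fsupp_on_mono by blast
  moreover have "IC_delta le f \<in> ?S"
  proof (rule IC_delta_mem_subspace[OF _ fs.subspace_span])
    fix a b d assume "f (a, d) \<noteq> 0" "le a b" "le b d"
    with f have "(a, b) \<in> P \<or> (b, d) \<in> Q"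
      by (auto simp: fsupp_on_def wedge_pairs_def)
    moreover have "unit_fun (a, b) \<in> ?C" "unit_fun (b, d) \<in> ?C"
      using \<open>le a b\<close> \<open>le b d\<close> by (simp_all add: IC_carrier_eq)
    ultimately have "tens (unit_fun (a, b)) (unit_fun (b, d)) \<in> tens_sp (fsupp_on P) ?C \<union> tens_sp ?C (fsupp_on Q)"
      using tens_mem_tens_sp[of "unit_fun (a, b)" "fsupp_on P" "unit_fun (b, d)" ?C]
        tens_mem_tens_sp[of "unit_fun (a, b)" ?C "unit_fun (b, d)" "fsupp_on Q"] by auto
    then show "tens (unit_fun (a, b)) (unit_fun (b, d)) \<in> ?S"
      by (rule fs.span_base)
  qed (use f in \<open>simp add: fsupp_on_def\<close>)
  ultimately show "f \<in> wedge ?C (IC_delta le) (fsupp_on P) (fsupp_on Q)"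
    by (simp add: wedge_def)
qed

lemma coradical_filt_eq:
  "coradical_filt (IC_carrier le) (IC_delta le) n = (fsupp_on (coradical_filt_pairs n) :: ('a \<times> 'a \<Rightarrow> 'k::field) set)"
proof (induction n)
  case (Suc n)
  have "coradical_filt (IC_carrier le) (IC_delta le) (Suc n)
      = wedge (IC_carrier le) (IC_delta le) (fsupp_on (coradical_filt_pairs 0))
          (fsupp_on (coradical_filt_pairs n) :: ('a \<times> 'a \<Rightarrow> 'k) set)"
    by (simp only: coradical_filt.simps coradical_eq Suc.IH)
  also have "\<dots> = fsupp_on (coradical_filt_pairs (Suc n))"
    unfolding coradical_filt_pairs.simps(2) by (rule subset_antisym[OF wedge_fsupp_on_subset fsupp_on_subset_wedge])
  finally show ?case .
qed (simp add: coradical_eq)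

lemma coradical_filt_pairs_subset: "coradical_filt_pairs n \<subseteq> {(x, y). le x y}"
  by (cases n) (auto simp: wedge_pairs_def)

end

theorem mainTheorem6:
  fixes le :: "'a \<Rightarrow> 'a \<Rightarrow> bool"
  assumes refl: "\<forall>x. le x x"
    and trans: "\<forall>x y z. le x y \<longrightarrow> le y z \<longrightarrow> le x z"
    and locfin: "\<forall>x y. finite {z. le x z \<and> le z y}"
  shows "coradical_basis (IC_carrier le :: ('a \<times> 'a \<Rightarrow> 'k::field) set) (IC_delta le)
           {e_basis x y | x y. le x y}"
proof -
  interpret locally_finite_preorder le
    using assms by unfold_locales blast+
  have basis: "{e_basis x y | x y. le x y} = (unit_fun ` {(x, y). le x y} :: ('a \<times> 'a \<Rightarrow> 'k) set)"
    by (auto simp: e_basis_def unit_fun_def)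
  show ?thesis
    unfolding coradical_basis_def basis coradical_filt_eq
    unfolding IC_carrier_eq unit_funs_inter_fsupp_on
    using coradical_filt_pairs_subset by (simp add: Int_absorb1 basis_unit_funs)
qed

end
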